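(* For every Boolean matrix $I\in\{0,1\}^{n\times m}$, $\mathrm{rank}_\mathrm{B}(I)\leq\mathrm{rank}_\mathrm{B}(\mathcal{E}(I))$.
   Context: $\mathrm{rank}_\mathrm{B}(K)$ (Boolean rank) of $K\in\{0,1\}^{n\times m}$ is the least $k$ for which there exist $A\in\{0,1\}^{n\times k}$, $B\in\{0,1\}^{k\times m}$ with $K=A\circ B$, where $(A\circ B)_{ij}=\max_{l=1}^k\min(A_{il},B_{lj})$. With $X=\{1,\dots,n\}$, $Y=\{1,\dots,m\}$ and for $C\subseteq X$, $D\subseteq Y$: $C^{\uparrow}=\{j\mid \forall i\in C: I_{ij}=1\}$, $D^{\downarrow}=\{i\mid \forall j\in D: I_{ij}=1\}$; $\mathcal{B}(I)=\{\langle C,D\rangle\mid C^\uparrow=D, D^\downarrow=C\}$ ordered by inclusion of first components; $\gamma(i)=\langle\{i\}^{\uparrow\downarrow},\{i\}^\uparrow\rangle$, $\mu(j)=\langle\{j\}^\downarrow,\{j\}^{\downarrow\uparrow}\rangle$, $\mathcal{I}_{ij}=\{c\in\mathcal{B}(I)\mid\gamma(i)\leq c\leq\mu(j)\}$. $\mathcal{E}(I)\in\{0,1\}^{n\times m}$ is defined by $\mathcal{E}(I)_{ij}=1$ iff $\mathcal{I}_{ij}$ is non-empty and minimal w.r.t. $\subseteq$ among the non-empty sets $\mathcal{I}_{i'j'}$. *)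

theory Defs
  imports Main
begin

text \<open>A Boolean n x m matrix is represented by a predicate K :: nat => nat => bool,
  with rows indexed by {0..<n} and columns by {0..<m}; entries outside are irrelevant.\<close>

definition bool_prod_eq :: "nat \<Rightarrow> nat \<Rightarrow> nat \<Rightarrow> (nat \<Rightarrow> nat \<Rightarrow> bool) \<Rightarrow> (nat \<Rightarrow> nat \<Rightarrow> bool)
    \<Rightarrow> (nat \<Rightarrow> nat \<Rightarrow> bool) \<Rightarrow> bool" where
  "bool_prod_eq n m k K A B \<longleftrightarrow> (\<forall>i<n. \<forall>j<m. K i j = (\<exists>l<k. A i l \<and> B l j))"

definition bool_rank :: "nat \<Rightarrow> nat \<Rightarrow> (nat \<Rightarrow> nat \<Rightarrow> bool) \<Rightarrow> nat" where
  "bool_rank n m K = (LEAST k. \<exists>A B. bool_prod_eq n m k K A B)"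

definition up :: "nat \<Rightarrow> nat \<Rightarrow> (nat \<Rightarrow> nat \<Rightarrow> bool) \<Rightarrow> nat set \<Rightarrow> nat set" where
  "up n m I C = {j. j < m \<and> (\<forall>i\<in>C. I i j)}"

definition down :: "nat \<Rightarrow> nat \<Rightarrow> (nat \<Rightarrow> nat \<Rightarrow> bool) \<Rightarrow> nat set \<Rightarrow> nat set" where
  "down n m I D = {i. i < n \<and> (\<forall>j\<in>D. I i j)}"

definition concepts :: "nat \<Rightarrow> nat \<Rightarrow> (nat \<Rightarrow> nat \<Rightarrow> bool) \<Rightarrow> (nat set \<times> nat set) set" where
  "concepts n m I = {(C, D). C \<subseteq> {..<n} \<and> D \<subseteq> {..<m} \<and> up n m I C = D \<and> down n m I D = C}"

definition concept_le :: "nat set \<times> nat set \<Rightarrow> nat set \<times> nat set \<Rightarrow> bool" where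
  "concept_le c d \<longleftrightarrow> fst c \<subseteq> fst d"

definition gamma :: "nat \<Rightarrow> nat \<Rightarrow> (nat \<Rightarrow> nat \<Rightarrow> bool) \<Rightarrow> nat \<Rightarrow> nat set \<times> nat set" where
  "gamma n m I i = (down n m I (up n m I {i}), up n m I {i})"

definition mu :: "nat \<Rightarrow> nat \<Rightarrow> (nat \<Rightarrow> nat \<Rightarrow> bool) \<Rightarrow> nat \<Rightarrow> nat set \<times> nat set" where
  "mu n m I j = (down n m I {j}, up n m I (down n m I {j}))"

definition interval :: "nat \<Rightarrow> nat \<Rightarrow> (nat \<Rightarrow> nat \<Rightarrow> bool) \<Rightarrow> nat \<Rightarrow> nat \<Rightarrow> (nat set \<times> nat set) set" where
  "interval n m I i j = {c \<in> concepts n m I. concept_le (gamma n m I i) c \<and> concept_le c (mu n m I j)}"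

definition essential :: "nat \<Rightarrow> nat \<Rightarrow> (nat \<Rightarrow> nat \<Rightarrow> bool) \<Rightarrow> nat \<Rightarrow> nat \<Rightarrow> bool" where
  "essential n m I i j \<longleftrightarrow> interval n m I i j \<noteq> {} \<and>
     (\<forall>i'<n. \<forall>j'<m. interval n m I i' j' \<noteq> {} \<and> interval n m I i' j' \<subseteq> interval n m I i j
        \<longrightarrow> interval n m I i' j' = interval n m I i j)"

end

theory Submission
  imports Defs
begin

text \<open>Take an optimal factorization of a matrix K with E(I) \<le> K \<le> I and replace each factor,
  with column set D, by the formal concept generated by D. These concepts are rectangles inside I.
  They still cover I: for I_ij = 1, a minimal non-empty interval inside the interval of (i,j)
  belongs to an essential cell (i',j'); a factor covering it has all its columns in row i' of I,
  so its concept lies between gamma(i') and mu(j'), hence in the interval of (i,j).\<close>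

lemma down_antimono: "D \<subseteq> D' \<Longrightarrow> down n m I D' \<subseteq> down n m I D"
  by (auto simp: down_def)

lemma up_down_up: "C \<subseteq> {..<n} \<Longrightarrow> up n m I (down n m I (up n m I C)) = up n m I C"
  by (auto simp: up_def down_def)

lemma down_up_down: "D \<subseteq> {..<m} \<Longrightarrow> down n m I (up n m I (down n m I D)) = down n m I D"
  by (auto simp: up_def down_def)

lemma mem_down_up_singleton: "i < n \<Longrightarrow> i \<in> down n m I (up n m I {i})"
  by (auto simp: up_def down_def)

lemma concept_generated_by_down:
  "D \<subseteq> {..<m} \<Longrightarrow> (down n m I D, up n m I (down n m I D)) \<in> concepts n m I"
  using down_up_down[of D m n I] by (auto simp: concepts_def up_def down_def)

lemma mem_interval_iff:
  "c \<in> interval n m I i j \<longleftrightarrow>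
     c \<in> concepts n m I \<and> down n m I (up n m I {i}) \<subseteq> fst c \<and> fst c \<subseteq> down n m I {j}"
  by (simp add: interval_def concept_le_def gamma_def mu_def)

lemma finite_interval: "finite (interval n m I i j)"
proof (rule finite_subset)
  show "interval n m I i j \<subseteq> Pow {..<n} \<times> Pow {..<m}"
    by (auto simp: interval_def concepts_def)
qed simp

lemma gamma_mem_interval:
  assumes "i < n" "j < m" "I i j"
  shows "gamma n m I i \<in> interval n m I i j"
  using assms up_down_up[of "{i}" n m I]
  by (auto simp: mem_interval_iff concepts_def gamma_def up_def down_def)

lemma mem_interval_cell:
  assumes "c \<in> interval n m I i j" "i < n" "j < m"
  shows "i \<in> fst c" "j \<in> snd c"
  using assms mem_down_up_singleton[of i n m I]
  by (auto simp: mem_interval_iff concepts_def up_def down_def)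

lemma essential_imp:
  assumes "essential n m I i j" "i < n"
  shows "I i j"
proof -
  obtain c where "c \<in> interval n m I i j"
    using assms(1) by (auto simp: essential_def)
  then have "down n m I (up n m I {i}) \<subseteq> down n m I {j}"
    by (auto simp: mem_interval_iff)
  with mem_down_up_singleton[OF assms(2), of m I] show ?thesis
    by (auto simp: down_def)
qed

lemma essential_below_interval:
  assumes "i < n" "j < m" "interval n m I i j \<noteq> {}"
  obtains i' j' where "i' < n" "j' < m" "essential n m I i' j'"
    "interval n m I i' j' \<subseteq> interval n m I i j"
proof -
  let ?size = "\<lambda>(a, b). card (interval n m I a b)"
  define P where "P = (\<lambda>(a, b). a < n \<and> b < m \<and> interval n m I a b \<noteq> {}
                                 \<and> interval n m I a b \<subseteq> interval n m I i j)"
  have "P (i, j)" using assms by (simp add: P_def)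
  then obtain i' j' where P': "P (i', j')" and least: "\<And>y. P y \<Longrightarrow> ?size (i', j') \<le> ?size y"
    using ex_has_least_nat[of P "(i, j)" ?size] by auto
  have "essential n m I i' j'"
    unfolding essential_def
  proof (intro conjI allI impI)
    show "interval n m I i' j' \<noteq> {}" using P' by (simp add: P_def)
    fix a b assume ab: "a < n" "b < m"
      and sub: "interval n m I a b \<noteq> {} \<and> interval n m I a b \<subseteq> interval n m I i' j'"
    with P' have "P (a, b)" by (auto simp: P_def)
    with least have "card (interval n m I i' j') \<le> card (interval n m I a b)" by fastforce
    with sub show "interval n m I a b = interval n m I i' j'"
      by (meson card_seteq finite_interval)
  qed
  with P' that show ?thesis by (auto simp: P_def)
qed

lemma concept_of_row_subset_mem_interval:
  assumes "D \<subseteq> up n m I {i}" "j \<in> D"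
  shows "(down n m I D, up n m I (down n m I D)) \<in> interval n m I i j"
proof -
  have "D \<subseteq> {..<m}" using assms(1) by (auto simp: up_def)
  moreover have "down n m I (up n m I {i}) \<subseteq> down n m I D"
    using assms(1) by (rule down_antimono)
  moreover have "down n m I D \<subseteq> down n m I {j}"
    using assms(2) by (intro down_antimono) simp
  ultimately show ?thesis
    by (simp add: mem_interval_iff concept_generated_by_down)
qed

lemma bool_prod_eq_concepts_of_columns:
  assumes fac: "bool_prod_eq n m k K A B"
    and essential_le: "\<forall>i<n. \<forall>j<m. essential n m I i j \<longrightarrow> K i j"
    and le_I: "\<forall>i<n. \<forall>j<m. K i j \<longrightarrow> I i j"
  defines "col \<equiv> \<lambda>l. {j. j < m \<and> B l j}"
  shows "bool_prod_eq n m k I (\<lambda>i l. i \<in> down n m I (col l))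
                              (\<lambda>l j. j \<in> up n m I (down n m I (col l)))"
  unfolding bool_prod_eq_def
proof (intro allI impI iffI)
  fix i j assume ij: "i < n" "j < m" "I i j"
  with gamma_mem_interval obtain i' j' where i'j': "i' < n" "j' < m" "essential n m I i' j'"
      and sub: "interval n m I i' j' \<subseteq> interval n m I i j"
    by (metis empty_iff essential_below_interval)
  then obtain l where l: "l < k" "A i' l" "B l j'"
    using fac essential_le unfolding bool_prod_eq_def by blast
  have "col l \<subseteq> up n m I {i'}"
    using fac l(1,2) le_I i'j'(1) unfolding bool_prod_eq_def col_def up_def by blast
  moreover have "j' \<in> col l" using i'j'(2) l(3) by (simp add: col_def)
  ultimately have "(down n m I (col l), up n m I (down n m I (col l))) \<in> interval n m I i j"
    using sub concept_of_row_subset_mem_interval by blast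
  with l(1) ij show "\<exists>l<k. i \<in> down n m I (col l) \<and> j \<in> up n m I (down n m I (col l))"
    using mem_interval_cell by fastforce
next
  fix i j assume "\<exists>l<k. i \<in> down n m I (col l) \<and> j \<in> up n m I (down n m I (col l))"
  then show "I i j" by (auto simp: up_def)
qed

lemma bool_rank_le: "bool_prod_eq n m k K A B \<Longrightarrow> bool_rank n m K \<le> k"
  unfolding bool_rank_def by (auto intro: Least_le)

lemma bool_rank_attained: "\<exists>A B. bool_prod_eq n m (bool_rank n m K) K A B"
proof -
  have "bool_prod_eq n m n K (\<lambda>i l. i = l) K"
    by (auto simp: bool_prod_eq_def)
  then have "\<exists>A B. bool_prod_eq n m n K A B" by blast
  then show ?thesis
    unfolding bool_rank_def by (rule LeastI)
qed

lemma bool_rank_le_between_essential: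
  assumes "\<forall>i<n. \<forall>j<m. essential n m I i j \<longrightarrow> K i j"
    and "\<forall>i<n. \<forall>j<m. K i j \<longrightarrow> I i j"
  shows "bool_rank n m I \<le> bool_rank n m K"
proof -
  obtain A B where "bool_prod_eq n m (bool_rank n m K) K A B"
    using bool_rank_attained by blast
  from bool_prod_eq_concepts_of_columns[OF this assms] show ?thesis
    by (rule bool_rank_le)
qed

theorem theorem4:
  fixes I :: "nat \<Rightarrow> nat \<Rightarrow> bool" and n m :: nat
  shows "bool_rank n m I \<le> bool_rank n m (essential n m I)"
  by (rule bool_rank_le_between_essential) (auto intro: essential_imp)

end
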